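(* If $Q$ is a quantity space over a field $K$, then any two bases for $Q$ have the same cardinality.
   Context: A scalable monoid over a (unital, associative) ring $R$ is a monoid $X$ (identity $1_X$, product written $xy$) together with a map $R\times X\to X$, $(\alpha,x)\mapsto\alpha\cdot x$, such that $1\cdot x=x$, $\alpha\cdot(\beta\cdot x)=\alpha\beta\cdot x$ and $\alpha\cdot(xy)=(\alpha\cdot x)y=x(\alpha\cdot y)$. A quantity space over a field $K$ is a commutative scalable monoid $Q$ over $K$ for which there exists a basis, i.e. a finite set $\{e_1,\ldots,e_n\}$ of invertible elements of $Q$ such that every $x\in Q$ has a unique expansion $x=\mu\cdot\prod_{i=1}^n e_i^{k_i}$ with $\mu\in K$ and $k_1,\ldots,k_n\in\mathbb{Z}$. *)

theory Defs
  imports Main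
begin

definition monoid_ops :: "('q \<Rightarrow> 'q \<Rightarrow> 'q) \<Rightarrow> 'q \<Rightarrow> bool" where
  "monoid_ops mult one \<longleftrightarrow>
     (\<forall>x y z. mult (mult x y) z = mult x (mult y z)) \<and>
     (\<forall>x. mult one x = x) \<and> (\<forall>x. mult x one = x)"

definition scalable_monoid ::
  "('q \<Rightarrow> 'q \<Rightarrow> 'q) \<Rightarrow> 'q \<Rightarrow> ('k::ring_1 \<Rightarrow> 'q \<Rightarrow> 'q) \<Rightarrow> bool" where
  "scalable_monoid mult one scal \<longleftrightarrow>
     monoid_ops mult one \<and>
     (\<forall>x. scal 1 x = x) \<and>
     (\<forall>a b x. scal a (scal b x) = scal (a * b) x) \<and>
     (\<forall>a x y. scal a (mult x y) = mult (scal a x) y) \<and>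
     (\<forall>a x y. scal a (mult x y) = mult x (scal a y))"

definition invertible_el :: "('q \<Rightarrow> 'q \<Rightarrow> 'q) \<Rightarrow> 'q \<Rightarrow> 'q \<Rightarrow> bool" where
  "invertible_el mult one x \<longleftrightarrow> (\<exists>y. mult x y = one \<and> mult y x = one)"

definition inv_el :: "('q \<Rightarrow> 'q \<Rightarrow> 'q) \<Rightarrow> 'q \<Rightarrow> 'q \<Rightarrow> 'q" where
  "inv_el mult one x = (THE y. mult x y = one \<and> mult y x = one)"

primrec npow :: "('q \<Rightarrow> 'q \<Rightarrow> 'q) \<Rightarrow> 'q \<Rightarrow> 'q \<Rightarrow> nat \<Rightarrow> 'q" where
  "npow mult one x 0 = one"
| "npow mult one x (Suc n) = mult x (npow mult one x n)"

definition zpow :: "('q \<Rightarrow> 'q \<Rightarrow> 'q) \<Rightarrow> 'q \<Rightarrow> 'q \<Rightarrow> int \<Rightarrow> 'q" where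
  "zpow mult one x k =
     (if 0 \<le> k then npow mult one x (nat k)
      else npow mult one (inv_el mult one x) (nat (- k)))"

text \<open>The product \<open>\<Prod>e\<in>E. e ^ k e\<close> in a commutative monoid (well defined by commutativity).\<close>
definition basis_prod ::
  "('q \<Rightarrow> 'q \<Rightarrow> 'q) \<Rightarrow> 'q \<Rightarrow> 'q set \<Rightarrow> ('q \<Rightarrow> int) \<Rightarrow> 'q" where
  "basis_prod mult one E k = Finite_Set.fold (\<lambda>e acc. mult (zpow mult one e (k e)) acc) one E"

definition is_basis ::
  "('q \<Rightarrow> 'q \<Rightarrow> 'q) \<Rightarrow> 'q \<Rightarrow> ('k::field \<Rightarrow> 'q \<Rightarrow> 'q) \<Rightarrow> 'q set \<Rightarrow> bool" where
  "is_basis mult one scal E \<longleftrightarrow>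
     finite E \<and> (\<forall>e\<in>E. invertible_el mult one e) \<and>
     (\<forall>x. \<exists>\<mu> k. x = scal \<mu> (basis_prod mult one E k)) \<and>
     (\<forall>\<mu> k \<mu>' k'. scal \<mu> (basis_prod mult one E k) = scal \<mu>' (basis_prod mult one E k')
        \<longrightarrow> \<mu> = \<mu>' \<and> (\<forall>e\<in>E. k e = k' e))"

definition quantity_space ::
  "('q \<Rightarrow> 'q \<Rightarrow> 'q) \<Rightarrow> 'q \<Rightarrow> ('k::field \<Rightarrow> 'q \<Rightarrow> 'q) \<Rightarrow> bool" where
  "quantity_space mult one scal \<longleftrightarrow>
     scalable_monoid mult one scal \<and> (\<forall>x y. mult x y = mult y x) \<and>
     (\<exists>E. is_basis mult one scal E)"

end

theory Submission
  imports Defs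
begin

(* Fix a basis E and send a quantity x to the set of basis elements in which its exponent is
   odd. This parity map is onto Pow E, and x, y have the same parity exactly when some scalar
   multiples of x and of y z^2 coincide for some z, a relation that does not mention E.
   Hence 2^|E| is the number of classes of that relation, whatever the basis. *)

lemma card_range_eq_if_same_fibres:
  assumes "\<And>x y. f x = f y \<longleftrightarrow> g x = g y"
  shows "card (range f) = card (range g)"
proof -
  let ?h = "\<lambda>a. g (inv f a)"
  have h_f: "?h (f x) = g x" for x
    using assms f_inv_into_f[of "f x" f UNIV] by blast
  have "inj_on ?h (range f)"
    by (rule inj_onI) (auto simp: h_f assms)
  moreover have "?h ` range f = range g"
    by (auto simp: h_f image_image)
  ultimately show ?thesis
    by (metis card_image)
qed

context comm_monoid
begin

lemma npow_add: "npow f \<^bold>1 x (m + n) = npow f \<^bold>1 x m \<^bold>* npow f \<^bold>1 x n"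
  by (induction m) (simp_all add: assoc)

lemma npow_neutral: "npow f \<^bold>1 \<^bold>1 n = \<^bold>1"
  by (induction n) simp_all

lemma npow_distrib: "npow f \<^bold>1 (x \<^bold>* y) n = npow f \<^bold>1 x n \<^bold>* npow f \<^bold>1 y n"
  by (induction n) (simp_all add: ac_simps)

lemma inv_el_eqI:
  assumes "e \<^bold>* i = \<^bold>1"
  shows "inv_el f \<^bold>1 e = i"
  unfolding inv_el_def
proof (rule the_equality)
  show "e \<^bold>* i = \<^bold>1 \<and> i \<^bold>* e = \<^bold>1"
    using assms commute by metis
next
  fix j
  assume "e \<^bold>* j = \<^bold>1 \<and> j \<^bold>* e = \<^bold>1"
  then have "j = j \<^bold>* (e \<^bold>* i)" and "j \<^bold>* e = \<^bold>1"
    using assms by simp_all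
  then show "j = i"
    by (metis assoc left_neutral)
qed

lemma zpow_int_diff:
  assumes "e \<^bold>* i = \<^bold>1"
  shows "zpow f \<^bold>1 e (int m - int n) = npow f \<^bold>1 e m \<^bold>* npow f \<^bold>1 i n"
proof -
  have cancel: "npow f \<^bold>1 e k \<^bold>* npow f \<^bold>1 i k = \<^bold>1" for k
    using npow_distrib[of e i k] assms by (simp add: npow_neutral)
  show ?thesis
  proof (cases "n \<le> m")
    case True
    then obtain d where m: "m = n + d"
      using le_Suc_ex by blast
    have "npow f \<^bold>1 e m \<^bold>* npow f \<^bold>1 i n
        = npow f \<^bold>1 e d \<^bold>* (npow f \<^bold>1 e n \<^bold>* npow f \<^bold>1 i n)"
      unfolding m npow_add by (simp add: ac_simps)
    then show ?thesis
      unfolding zpow_def using m cancel by simp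
  next
    case False
    then obtain d where n: "n = m + d"
      using le_Suc_ex nat_le_linear by blast
    have "npow f \<^bold>1 e m \<^bold>* npow f \<^bold>1 i n
        = (npow f \<^bold>1 e m \<^bold>* npow f \<^bold>1 i m) \<^bold>* npow f \<^bold>1 i d"
      unfolding n npow_add by (simp add: ac_simps)
    then show ?thesis
      unfolding zpow_def using n False cancel inv_el_eqI[OF assms] by simp
  qed
qed

lemma zpow_add:
  assumes "invertible_el f \<^bold>1 e"
  shows "zpow f \<^bold>1 e (a + b) = zpow f \<^bold>1 e a \<^bold>* zpow f \<^bold>1 e b"
proof -
  obtain i where i: "e \<^bold>* i = \<^bold>1"
    using assms unfolding invertible_el_def by blast
  obtain m1 n1 m2 n2 where a: "a = int m1 - int n1" and b: "b = int m2 - int n2"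
    by (metis int_diff_cases)
  have "a + b = int (m1 + m2) - int (n1 + n2)"
    using a b by simp
  then have "zpow f \<^bold>1 e (a + b) = npow f \<^bold>1 e (m1 + m2) \<^bold>* npow f \<^bold>1 i (n1 + n2)"
    by (simp only: zpow_int_diff[OF i])
  then show ?thesis
    unfolding a b zpow_int_diff[OF i] npow_add by (simp add: ac_simps)
qed

interpretation bprod: comm_monoid_set f z ..

lemma basis_prod_eq_F: "basis_prod f \<^bold>1 E k = bprod.F (\<lambda>e. zpow f \<^bold>1 e (k e)) E"
  by (simp add: basis_prod_def bprod.eq_fold comp_def)

lemma basis_prod_add:
  assumes "\<forall>e\<in>E. invertible_el f \<^bold>1 e"
  shows "basis_prod f \<^bold>1 E (\<lambda>e. k e + l e) = basis_prod f \<^bold>1 E k \<^bold>* basis_prod f \<^bold>1 E l"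
  unfolding basis_prod_eq_F bprod.distrib[symmetric]
  using assms by (intro bprod.cong) (simp_all add: zpow_add)

lemma basis_prod_cong:
  "(\<And>e. e \<in> E \<Longrightarrow> k e = l e) \<Longrightarrow> basis_prod f \<^bold>1 E k = basis_prod f \<^bold>1 E l"
  unfolding basis_prod_eq_F by (rule bprod.cong) simp_all

end

locale comm_scalable_monoid = comm_monoid mult one
  for mult :: "'q \<Rightarrow> 'q \<Rightarrow> 'q" and one :: 'q +
  fixes scal :: "'k::field \<Rightarrow> 'q \<Rightarrow> 'q"
  assumes scal_one: "scal 1 x = x"
    and scal_scal: "scal a (scal b x) = scal (a * b) x"
    and scal_mult_left: "scal a (mult x y) = mult (scal a x) y"
begin

lemma scal_mult_right: "scal a (mult x y) = mult x (scal a y)"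
  by (metis commute scal_mult_left)

lemma mult_scal_scal: "mult (scal a x) (scal b y) = scal (a * b) (mult x y)"
  by (simp add: scal_mult_left[symmetric] scal_mult_right[symmetric] scal_scal mult.commute)

definition square_equiv :: "'q \<Rightarrow> 'q \<Rightarrow> bool" where
  "square_equiv x y \<longleftrightarrow> (\<exists>\<mu> \<nu> z. scal \<mu> x = scal \<nu> (mult y (mult z z)))"

end

lemma quantity_space_imp_comm_scalable_monoid:
  assumes "quantity_space mult one scal"
  shows "comm_scalable_monoid mult one scal"
  using assms unfolding quantity_space_def scalable_monoid_def monoid_ops_def
  by unfold_locales blast+

locale quantity_basis = comm_scalable_monoid mult one scal
  for mult :: "'q \<Rightarrow> 'q \<Rightarrow> 'q" and one :: 'q and scal :: "'k::field \<Rightarrow> 'q \<Rightarrow> 'q" +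
  fixes E :: "'q set"
  assumes basis: "is_basis mult one scal E"
begin

lemma finite_basis: "finite E"
  using basis unfolding is_basis_def by blast

lemma basis_invertible: "\<forall>e\<in>E. invertible_el mult one e"
  using basis unfolding is_basis_def by blast

definition coord :: "'q \<Rightarrow> 'q \<Rightarrow> int" where
  "coord x = (SOME k. \<exists>\<mu>. x = scal \<mu> (basis_prod mult one E k))"

lemma coord_expansion: "\<exists>\<mu>. x = scal \<mu> (basis_prod mult one E (coord x))"
proof -
  have "\<exists>k \<mu>. x = scal \<mu> (basis_prod mult one E k)"
    using basis unfolding is_basis_def by blast
  then show ?thesis
    unfolding coord_def by (rule someI_ex)
qed

lemma coord_eqI:
  assumes "x = scal \<mu> (basis_prod mult one E k)" and "e \<in> E"
  shows "coord x e = k e"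
proof -
  obtain \<nu> where "x = scal \<nu> (basis_prod mult one E (coord x))"
    using coord_expansion by blast
  then show ?thesis
    using basis assms unfolding is_basis_def by metis
qed

lemma coord_scal: "e \<in> E \<Longrightarrow> coord (scal a x) e = coord x e"
  by (metis coord_eqI coord_expansion scal_scal)

lemma coord_mult:
  assumes "e \<in> E"
  shows "coord (mult x y) e = coord x e + coord y e"
proof -
  obtain \<mu> \<nu> where x: "x = scal \<mu> (basis_prod mult one E (coord x))"
    and y: "y = scal \<nu> (basis_prod mult one E (coord y))"
    using coord_expansion by metis
  have "mult x y = scal (\<mu> * \<nu>)
      (mult (basis_prod mult one E (coord x)) (basis_prod mult one E (coord y)))"
    using x y mult_scal_scal by metis
  also have "\<dots> = scal (\<mu> * \<nu>) (basis_prod mult one E (\<lambda>e. coord x e + coord y e))"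
    by (simp add: basis_prod_add basis_invertible)
  finally show ?thesis
    using coord_eqI assms by blast
qed

definition parity :: "'q \<Rightarrow> 'q set" where
  "parity x = {e\<in>E. odd (coord x e)}"

lemma range_parity: "range parity = Pow E"
proof
  show "range parity \<subseteq> Pow E"
    unfolding parity_def by auto
next
  show "Pow E \<subseteq> range parity"
  proof
    fix S
    assume "S \<in> Pow E"
    define k :: "'q \<Rightarrow> int" where "k e = (if e \<in> S then 1 else 0)" for e
    have "coord (basis_prod mult one E k) e = k e" if "e \<in> E" for e
      using coord_eqI[OF scal_one[symmetric] that] .
    then have "parity (basis_prod mult one E k) = S"
      using \<open>S \<in> Pow E\<close> unfolding parity_def k_def by (auto split: if_splits)
    then show "S \<in> range parity"
      by (metis rangeI)
  qed
qed

lemma parity_eq_iff_square_equiv: "parity x = parity y \<longleftrightarrow> square_equiv x y"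
proof
  assume "square_equiv x y"
  then obtain \<mu> \<nu> z where eq: "scal \<mu> x = scal \<nu> (mult y (mult z z))"
    unfolding square_equiv_def by blast
  have "coord x e = coord y e + 2 * coord z e" if "e \<in> E" for e
    using arg_cong[OF eq, of "\<lambda>q. coord q e"] that by (simp add: coord_scal coord_mult)
  then show "parity x = parity y"
    unfolding parity_def by auto
next
  assume same: "parity x = parity y"
  define k l where "k = coord x" and "l = coord y"
  define c where "c e = (k e - l e) div 2" for e
  obtain \<mu> \<nu> where x: "x = scal \<mu> (basis_prod mult one E k)"
    and y: "y = scal \<nu> (basis_prod mult one E l)"
    unfolding k_def l_def using coord_expansion by metis
  have k_eq: "k e = l e + (c e + c e)" if "e \<in> E" for e
  proof -
    have "odd (k e) = odd (l e)"
      using same that unfolding parity_def k_def l_def by blast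
    then show ?thesis
      unfolding c_def by fastforce
  qed
  let ?z = "basis_prod mult one E c"
  have "mult y (mult ?z ?z) = scal \<nu> (mult (basis_prod mult one E l) (mult ?z ?z))"
    by (simp add: y scal_mult_left)
  also have "\<dots> = scal \<nu> (basis_prod mult one E (\<lambda>e. l e + (c e + c e)))"
    by (simp only: basis_prod_add[OF basis_invertible])
  also have "\<dots> = scal \<nu> (basis_prod mult one E k)"
    using k_eq by (intro arg_cong[where f="scal \<nu>"] basis_prod_cong) simp
  finally have "scal \<nu> x = scal \<mu> (mult y (mult ?z ?z))"
    by (simp add: x scal_scal mult.commute)
  then show "square_equiv x y"
    unfolding square_equiv_def by blast
qed

end

theorem proposition3p21:
  fixes mult :: "'q \<Rightarrow> 'q \<Rightarrow> 'q" and one :: 'q and scal :: "'k::field \<Rightarrow> 'q \<Rightarrow> 'q"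
    and E E' :: "'q set"
  assumes "quantity_space mult one scal"
    and "is_basis mult one scal E"
    and "is_basis mult one scal E'"
  shows "card E = card E'"
proof -
  interpret comm_scalable_monoid mult one scal
    using assms(1) by (rule quantity_space_imp_comm_scalable_monoid)
  interpret B: quantity_basis mult one scal E
    using assms(2) by unfold_locales
  interpret B': quantity_basis mult one scal E'
    using assms(3) by unfold_locales
  have "card (range B.parity) = card (range B'.parity)"
    by (rule card_range_eq_if_same_fibres)
      (simp add: B.parity_eq_iff_square_equiv B'.parity_eq_iff_square_equiv)
  then have "(2::nat) ^ card E = 2 ^ card E'"
    by (simp add: B.range_parity B'.range_parity card_Pow B.finite_basis B'.finite_basis)
  then show ?thesis
    by simp
qed

end
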